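(* Let $\Phi:I\to O$ be a linear map. Then $\Phi$ is completely positive if and only if $C_\Phi\in\mathcal{L}(\mathcal{M}_\Phi)$ is a positive operator on the Hilbert $O^{op}$-module $\mathcal{M}_\Phi$, i.e. $\langle \xi, C_\Phi(\xi)\rangle_{O^{op}}\ge 0$ for all $\xi\in\mathcal{M}_\Phi$.
   Context: All Hilbert spaces are finite dimensional and inner products are linear in the second variable. Let $H_{in}=\bigoplus_a H^a_{in}$ and $H_{out}=\bigoplus_b H^b_{out}$ be finite direct sums of finite-dimensional Hilbert spaces, and $I=\bigoplus_a B(H^a_{in})\subseteq B(H_{in})$, $O=\bigoplus_b B(H^b_{out})\subseteq B(H_{out})$. Let $\{e^a_i\}_i$ be an orthonormal basis of $H^a_{in}$ and $e^a_{ij}=\theta_{e^a_i,e^a_j}$ the corresponding matrix units of $B(H^a_{in})$, where $\theta_{\xi,\eta}(\eta')=\langle\eta,\eta'\rangle\xi$. $O^{op}$ denotes the opposite algebra of $O$: same vector space and involution, with product $a*b=ba$; it is a C*-algebra. A (right) Hilbert $A$-module over a C*-algebra $A$ is a right $A$-module with an $A$-valued inner product $\langle\cdot,\cdot\rangle_A$ (positive definite, $\langle x,y\rangle_A=\langle y,x\rangle_A^*$, $A$-linear in the second variable), complete for $\|x\|=\|\langle x,x\rangle_A\|^{1/2}$; $\mathcal{L}(\mathcal{M})$ denotes the adjointable $A$-linear operators. Let $\mathcal{M}_\Phi=H_{in}\otimes O^{op}$, the right Hilbert $O^{op}$-module with right action $(\xi\otimes a)*x=\xi\otimes(a*x)$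 and inner product $\langle\xi\otimes a,\eta\otimes b\rangle_{O^{op}}=\langle\xi,\eta\rangle\, a^* * b$. For a linear map $\Phi:I\to O$, $C_\Phi\in\mathcal{L}(\mathcal{M}_\Phi)$ is the $O^{op}$-linear operator determined by $C_\Phi(e^a_j\otimes 1)=\sum_i e^a_i\otimes\Phi(e^a_{ji})$, where $\Phi(e^a_{ji})$ is regarded as an element of $O^{op}$ (equivalently, under $\mathcal{L}(\mathcal{M}_\Phi)\cong B(H_{in})\otimes O^{op}$, $C_\Phi=\sum_{i,j,a}e^a_{ij}\otimes\Phi(e^a_{ji})$). *)

theory Defs
  imports "Jordan_Normal_Form.Matrix"
begin

text \<open>H_in = C^N with N = sum of the block sizes ns, standard
orthonormal basis e_0,...,e_(N-1); block a occupies the global indices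
[off ns a, off ns a + ns!a).  Similarly H_out = C^M for the block sizes ms.
Operators on C^n are n x n complex matrices.\<close>

definition adj :: "complex mat \<Rightarrow> complex mat" where
  "adj A = mat (dim_col A) (dim_row A) (\<lambda>(i,j). cnj (A $$ (j,i)))"

definition off :: "nat list \<Rightarrow> nat \<Rightarrow> nat" where
  "off ns a = sum_list (take a ns)"

definition tdim :: "nat list \<Rightarrow> nat" where
  "tdim ns = sum_list ns"

definition same_block :: "nat list \<Rightarrow> nat \<Rightarrow> nat \<Rightarrow> bool" where
  "same_block ns i j = (\<exists>a<length ns. off ns a \<le> i \<and> i < off ns a + ns!a
                                  \<and> off ns a \<le> j \<and> j < off ns a + ns!a)"

text \<open>The block-diagonal algebra  (+)_a B(H^a) \<subseteq> B(C^N).\<close>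
definition blockalg :: "nat list \<Rightarrow> complex mat set" where
  "blockalg ns = {A \<in> carrier_mat (tdim ns) (tdim ns).
      \<forall>i<tdim ns. \<forall>j<tdim ns. \<not> same_block ns i j \<longrightarrow> A $$ (i,j) = 0}"

definition munit :: "nat \<Rightarrow> nat \<Rightarrow> nat \<Rightarrow> complex mat" where
  "munit n i j = mat n n (\<lambda>(r,c). if r = i \<and> c = j then 1 else 0)"

definition cstar_pos :: "complex mat set \<Rightarrow> (complex mat \<Rightarrow> complex mat \<Rightarrow> complex mat)
    \<Rightarrow> complex mat \<Rightarrow> bool" where
  "cstar_pos A mul x = (\<exists>a\<in>A. x = mul (adj a) a)"

definition op_mult :: "complex mat \<Rightarrow> complex mat \<Rightarrow> complex mat" where
  "op_mult a b = b * a"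

definition linear_on :: "complex mat set \<Rightarrow> (complex mat \<Rightarrow> complex mat) \<Rightarrow> bool" where
  "linear_on A \<Phi> = ((\<forall>x\<in>A. \<forall>y\<in>A. \<Phi> (x + y) = \<Phi> x + \<Phi> y) \<and>
                    (\<forall>c. \<forall>x\<in>A. \<Phi> (c \<cdot>\<^sub>m x) = c \<cdot>\<^sub>m \<Phi> x))"

text \<open>M_k(B), k x k matrices with entries X i j (each n x n), realised as a
(k n) x (k n) matrix acting on C^k \<otimes> C^n.\<close>
definition blockmat :: "nat \<Rightarrow> nat \<Rightarrow> (nat \<Rightarrow> nat \<Rightarrow> complex mat) \<Rightarrow> complex mat" where
  "blockmat k n X = mat (k*n) (k*n) (\<lambda>(r,c). X (r div n) (c div n) $$ (r mod n, c mod n))"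

definition Mk :: "nat \<Rightarrow> nat \<Rightarrow> complex mat set \<Rightarrow> complex mat set" where
  "Mk k n B = {blockmat k n X | X. \<forall>i<k. \<forall>j<k. X i j \<in> B}"

definition completely_positive ::
  "nat list \<Rightarrow> nat list \<Rightarrow> (complex mat \<Rightarrow> complex mat) \<Rightarrow> bool" where
  "completely_positive ns ms \<Phi> =
    (\<forall>k X. (\<forall>i<k. \<forall>j<k. X i j \<in> blockalg ns) \<longrightarrow>
       cstar_pos (Mk k (tdim ns) (blockalg ns)) (*) (blockmat k (tdim ns) X) \<longrightarrow>
       cstar_pos (Mk k (tdim ms) (blockalg ms)) (*)
                 (blockmat k (tdim ms) (\<lambda>i j. \<Phi> (X i j))))"

text \<open>Finite sum of m x m matrices f g over the list gs (matrices do not form a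
  comm_monoid_add type because of dimensions).\<close>
definition msum :: "nat \<Rightarrow> (nat \<Rightarrow> complex mat) \<Rightarrow> nat list \<Rightarrow> complex mat" where
  "msum m f gs = foldr (\<lambda>g acc. f g + acc) gs (0\<^sub>m m m)"

text \<open>The Hilbert O^op-module M_Phi = H_in \<otimes> O^op.  An element
  xi = sum_g e_g \<otimes> xi g  (g < N) is represented by its coefficient family xi.\<close>
definition Mmod :: "nat list \<Rightarrow> nat list \<Rightarrow> (nat \<Rightarrow> complex mat) set" where
  "Mmod ns ms = {\<xi>. (\<forall>g<tdim ns. \<xi> g \<in> blockalg ms) \<and> (\<forall>g\<ge>tdim ns. \<xi> g = 0\<^sub>m 0 0)}"

definition mod_ract :: "(nat \<Rightarrow> complex mat) \<Rightarrow> complex mat \<Rightarrow> (nat \<Rightarrow> complex mat)" where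
  "mod_ract \<xi> x = (\<lambda>g. op_mult (\<xi> g) x)"

text \<open>Inner product <xi \<otimes> a, eta \<otimes> b> = <xi,eta> a^* * b (opposite product),
  extended sesquilinearly; the basis e_g is orthonormal.\<close>
definition mod_inner :: "nat list \<Rightarrow> nat list \<Rightarrow> (nat \<Rightarrow> complex mat) \<Rightarrow> (nat \<Rightarrow> complex mat) \<Rightarrow> complex mat" where
  "mod_inner ns ms \<xi> \<eta> = msum (tdim ms) (\<lambda>g. op_mult (adj (\<xi> g)) (\<eta> g)) [0..<tdim ns]"

text \<open>C_Phi, the O^op-linear operator with
  C_Phi(e_j \<otimes> 1) = sum_i e_i \<otimes> Phi(e_ji)   (i, j in the same block).
  By O^op-linearity C_Phi(e_j \<otimes> x) = sum_i e_i \<otimes> (Phi(e_ji) * x).\<close>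
definition C_op :: "nat list \<Rightarrow> nat list \<Rightarrow> (complex mat \<Rightarrow> complex mat)
    \<Rightarrow> (nat \<Rightarrow> complex mat) \<Rightarrow> (nat \<Rightarrow> complex mat)" where
  "C_op ns ms \<Phi> \<xi> = (\<lambda>i. if i < tdim ns then
       msum (tdim ms) (\<lambda>j. op_mult (\<Phi> (munit (tdim ns) j i)) (\<xi> j))
          (filter (same_block ns i) [0..<tdim ns])
     else 0\<^sub>m 0 0)"

end

theory Submission
  imports Defs
begin

text \<open>Both conditions are equivalent to nonnegativity of the Choi form, the sum of
  \<open>\<langle>y r, \<Phi>(e\<^sub>r\<^sub>s) (y s)\<rangle>\<close> over all pairs \<open>r, s\<close> in a common block of \<open>I\<close>.
  The quadratic form of \<open>\<langle>\<xi>, C\<^sub>\<Phi> \<xi>\<rangle>\<close> at a vector \<open>u\<close> is the Choi form at the rows of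
  \<open>u\<^sup>* \<xi>\<close>, and diagonal \<open>\<xi>\<close> produce every argument.  The Choi matrix \<open>\<Sum> e\<^sub>r\<^sub>s \<otimes> e\<^sub>r\<^sub>s\<close>
  is positive in \<open>M\<^sub>N(I)\<close>, so complete positivity makes the Choi form nonnegative; conversely,
  for \<open>X = b\<^sup>* b\<close> in \<open>M\<^sub>k(I)\<close> the quadratic form of \<open>(id \<otimes> \<Phi>)(X)\<close> is a sum of Choi forms, one
  for each row of \<open>b\<close>.  In both C*-algebras a block-diagonal matrix is positive iff it is
  positive semidefinite, since the Cholesky factor of a positive semidefinite matrix inherits
  its block pattern.\<close>

lemma sum_list_map_upt: "(\<Sum>g\<leftarrow>[0..<n]. h g) = (\<Sum>g<n. h g)"
  by (simp add: sum_set_upt_conv_sum_list_nat[symmetric] atLeast0LessThan)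

lemma sum_list_map_filter_upt: "(\<Sum>g\<leftarrow>filter P [0..<n]. h g) = (\<Sum>g<n. if P g then h g else 0)"
  by (simp add: sum_list_map_filter' sum_list_map_upt)

lemma sum_mult_lessThan_split:
  fixes g :: "nat \<Rightarrow> 'a::comm_monoid_add"
  shows "(\<Sum>r<k*n. g r) = (\<Sum>i<k. \<Sum>p<n. g (i*n+p))"
proof -
  have "(\<Sum>r<k*n. g r) = (\<Sum>i<k. \<Sum>r\<in>{i*n..<i*n+n}. g r)"
    using sum.nat_group[of g n k] by (simp add: mult.commute)
  also have "\<dots> = (\<Sum>i<k. \<Sum>p<n. g (i*n+p))"
    using sum.atLeastLessThan_shift_bounds[of g 0 "_ * n" n]
    by (simp add: atLeast0LessThan comp_def add.commute)
  finally show ?thesis .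
qed

lemma sum_swap_pairs:
  "(\<Sum>a\<in>A. \<Sum>b\<in>B. \<Sum>c\<in>C. \<Sum>d\<in>D. f a b c d) = (\<Sum>c\<in>C. \<Sum>d\<in>D. \<Sum>a\<in>A. \<Sum>b\<in>B. f a b c d)"
proof -
  have "(\<Sum>a\<in>A. \<Sum>b\<in>B. \<Sum>c\<in>C. \<Sum>d\<in>D. f a b c d) = (\<Sum>a\<in>A. \<Sum>c\<in>C. \<Sum>b\<in>B. \<Sum>d\<in>D. f a b c d)"
    by (intro sum.cong refl sum.swap)
  also have "\<dots> = (\<Sum>c\<in>C. \<Sum>a\<in>A. \<Sum>d\<in>D. \<Sum>b\<in>B. f a b c d)"
    by (subst sum.swap) (intro sum.cong refl sum.swap)
  also have "\<dots> = (\<Sum>c\<in>C. \<Sum>d\<in>D. \<Sum>a\<in>A. \<Sum>b\<in>B. f a b c d)"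
    by (intro sum.cong refl sum.swap)
  finally show ?thesis .
qed

section \<open>Positive semidefinite coefficient matrices\<close>

definition qform :: "nat \<Rightarrow> (nat \<Rightarrow> nat \<Rightarrow> complex) \<Rightarrow> (nat \<Rightarrow> complex) \<Rightarrow> complex" where
  "qform n A v = (\<Sum>r<n. \<Sum>c<n. cnj (v r) * A r c * v c)"

lemma qform_cong:
  "(\<And>r c. r < n \<Longrightarrow> c < n \<Longrightarrow> A r c = B r c) \<Longrightarrow> qform n A v = qform n B v"
  unfolding qform_def by (intro sum.cong refl) simp

lemma qform_supported:
  assumes "S \<subseteq> {..<n}" and "\<And>x. x \<notin> S \<Longrightarrow> v x = 0"
  shows "qform n A v = (\<Sum>r\<in>S. \<Sum>c\<in>S. cnj (v r) * A r c * v c)"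
proof -
  have fin: "finite S" using assms(1) finite_subset by blast
  have inner: "(\<Sum>c<n. cnj (v r) * A r c * v c) = (\<Sum>c\<in>S. cnj (v r) * A r c * v c)" for r
    using assms fin by (intro sum.mono_neutral_right) auto
  have "qform n A v = (\<Sum>r<n. \<Sum>c\<in>S. cnj (v r) * A r c * v c)"
    unfolding qform_def inner ..
  also have "\<dots> = (\<Sum>r\<in>S. \<Sum>c\<in>S. cnj (v r) * A r c * v c)"
    using assms fin by (intro sum.mono_neutral_right) auto
  finally show ?thesis .
qed

lemma qform_single:
  assumes "a < n"
  shows "qform n A (\<lambda>x. if x = a then z else 0) = cnj z * A a a * z"
  using assms by (subst qform_supported[of "{a}"]) auto

lemma qform_pair:
  assumes "a < n" "b < n" "a \<noteq> b"
  shows "qform n A (\<lambda>x. if x = a then z else if x = b then w else 0) =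
    cnj z * A a a * z + cnj z * A a b * w + cnj w * A b a * z + cnj w * A b b * w"
  using assms by (subst qform_supported[of "{a,b}"]) auto

lemma qform_Suc:
  "qform (Suc n) A v = cnj (v 0) * A 0 0 * v 0 + cnj (v 0) * (\<Sum>c<n. A 0 (Suc c) * v (Suc c))
     + (\<Sum>r<n. cnj (v (Suc r)) * A (Suc r) 0) * v 0 + qform n (\<lambda>r c. A (Suc r) (Suc c)) (\<lambda>r. v (Suc r))"
  unfolding qform_def sum.lessThan_Suc_shift
  by (simp add: sum.distrib sum_distrib_left sum_distrib_right mult_ac)

lemma qform_diff:
  "qform n (\<lambda>r c. B r c - u r * w c) v = qform n B v - (\<Sum>r<n. cnj (v r) * u r) * (\<Sum>c<n. w c * v c)"
  unfolding qform_def by (simp add: algebra_simps sum_subtractf sum_distrib_left sum_distrib_right)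

lemma qform_sum: "qform n (\<lambda>r c. \<Sum>g\<in>S. F g r c) u = (\<Sum>g\<in>S. qform n (F g) u)"
proof -
  have "qform n (\<lambda>r c. \<Sum>g\<in>S. F g r c) u = (\<Sum>r<n. \<Sum>g\<in>S. \<Sum>c<n. cnj (u r) * F g r c * u c)"
    unfolding qform_def sum_distrib_left sum_distrib_right by (intro sum.cong refl sum.swap)
  then show ?thesis unfolding qform_def by (subst (asm) sum.swap)
qed

lemma qform_nonneg_diag:
  assumes "\<forall>v. 0 \<le> qform n A v" and "a < n"
  shows "0 \<le> A a a"
  using assms qform_single[of a n A 1] by (metis complex_cnj_one mult_1_left mult_1_right)

lemma qform_nonneg_hermitian:
  assumes psd: "\<forall>v. 0 \<le> qform n A v" and r: "r < n" and c: "c < n"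
  shows "A c r = cnj (A r c)"
proof (cases "r = c")
  case True
  then show ?thesis
    using qform_nonneg_diag[OF psd r] by (simp add: less_eq_complex_def complex_eq_iff)
next
  case False
  have "0 \<le> qform n A (\<lambda>x. if x = r then 1 else if x = c then 1 else 0)"
    using psd by blast
  then have real: "0 \<le> A r r + A r c + A c r + A c c"
    using qform_pair[OF r c False, of A 1 1] by simp
  have "0 \<le> qform n A (\<lambda>x. if x = r then 1 else if x = c then \<i> else 0)"
    using psd by blast
  then have imag: "0 \<le> A r r + \<i> * A r c - \<i> * A c r + A c c"
    using qform_pair[OF r c False, of A 1 \<i>] by (simp add: algebra_simps)
  from real imag qform_nonneg_diag[OF psd r] qform_nonneg_diag[OF psd c] show ?thesis
    by (simp add: less_eq_complex_def complex_eq_iff)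
qed

lemma qform_nonneg_zero_diag:
  assumes psd: "\<forall>v. 0 \<le> qform n A v" and a: "a < n" and b: "b < n" and zero: "A a a = 0"
  shows "A a b = 0"
proof (cases "a = b")
  case False
  define \<beta> where "\<beta> = A b a"
  define d where "d = A b b"
  define x where "x = Re d + 1"
  have herm: "A a b = cnj \<beta>" unfolding \<beta>_def using qform_nonneg_hermitian[OF psd b a] .
  have d: "d = of_real (Re d)" "0 \<le> Re d"
    using qform_nonneg_diag[OF psd b] unfolding d_def by (simp_all add: less_eq_complex_def complex_eq_iff)
  have "0 \<le> qform n A (\<lambda>y. if y = a then of_real x else if y = b then - \<beta> else 0)"
    using psd by blast
  also have "\<dots> = cnj \<beta> * \<beta> * (d - 2 * of_real x)"
    unfolding qform_pair[OF a b False] zero herm d_def[symmetric] \<beta>_def[symmetric]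
    by (simp add: algebra_simps)
  also have "\<dots> = of_real ((cmod \<beta>)\<^sup>2 * (Re d - 2 * x))"
    using complex_norm_square[of \<beta>] d(1) by (simp add: mult.commute)
  finally have "0 \<le> (cmod \<beta>)\<^sup>2 * (Re d - 2 * x)"
    by (simp add: less_eq_complex_def)
  moreover have "Re d - 2 * x < 0" unfolding x_def using d(2) by simp
  ultimately have "(cmod \<beta>)\<^sup>2 \<le> 0" by (simp add: zero_le_mult_iff)
  then have "\<beta> = 0" by simp
  then show ?thesis using herm by simp
qed (use zero in simp)

lemma qform_nonneg_schur_complement:
  assumes psd: "\<forall>v. 0 \<le> qform (Suc n) A v"
  shows "0 \<le> qform n (\<lambda>r c. A (Suc r) (Suc c) - A (Suc r) 0 * A 0 (Suc c) / A 0 0) v"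
proof -
  define \<alpha> where "\<alpha> = A 0 0"
  define s where "s = (\<Sum>c<n. A 0 (Suc c) * v c)"
  have \<alpha>: "cnj \<alpha> = \<alpha>"
    using qform_nonneg_diag[OF psd, of 0] unfolding \<alpha>_def by (simp add: less_eq_complex_def complex_eq_iff)
  have cs: "(\<Sum>r<n. cnj (v r) * A (Suc r) 0) = cnj s"
    unfolding s_def cnj_sum using qform_nonneg_hermitian[OF psd, of 0] by (simp add: mult.commute)
  have "qform n (\<lambda>r c. A (Suc r) (Suc c) - A (Suc r) 0 * A 0 (Suc c) / A 0 0) v
      = qform n (\<lambda>r c. A (Suc r) (Suc c)) v - cnj s * s / \<alpha>"
    unfolding times_divide_eq_right[symmetric] qform_diff cs
    by (simp add: s_def \<alpha>_def sum_divide_distrib[symmetric] mult.commute)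
  also have "\<dots> = qform (Suc n) A (\<lambda>x. case x of 0 \<Rightarrow> - s / \<alpha> | Suc r \<Rightarrow> v r)"
    unfolding qform_Suc cs[symmetric]
    using \<alpha> by (cases "\<alpha> = 0") (simp_all add: s_def \<alpha>_def field_simps)
  also have "0 \<le> \<dots>" using psd by blast
  finally show ?thesis .
qed

definition border_factor :: "(nat \<Rightarrow> nat \<Rightarrow> complex) \<Rightarrow> (nat \<Rightarrow> nat \<Rightarrow> complex) \<Rightarrow> nat \<Rightarrow> nat \<Rightarrow> complex" where
  "border_factor A L p c = (case (p, c) of
      (0, 0) \<Rightarrow> of_real (sqrt (Re (A 0 0)))
    | (0, Suc c') \<Rightarrow> A 0 (Suc c') / of_real (sqrt (Re (A 0 0)))
    | (Suc p', Suc c') \<Rightarrow> L p' c'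
    | (Suc _, 0) \<Rightarrow> 0)"

text \<open>If \<open>A 0 0 = 0\<close>, the row \<open>A 0 _\<close> vanishes and division by zero yields \<open>0\<close>, so the
  first row of \<open>border_factor\<close> and the Schur complement need no case distinction.\<close>

lemma border_factor_eq:
  assumes psd: "\<forall>v. 0 \<le> qform (Suc n) A v"
    and L: "\<forall>r<n. \<forall>c<n. A (Suc r) (Suc c) - A (Suc r) 0 * A 0 (Suc c) / A 0 0 = (\<Sum>p<n. cnj (L p r) * L p c)"
    and r: "r < Suc n" and c: "c < Suc n"
  shows "A r c = (\<Sum>p<Suc n. cnj (border_factor A L p r) * border_factor A L p c)"
proof -
  define \<sigma> where "\<sigma> = complex_of_real (sqrt (Re (A 0 0)))"
  have "0 \<le> A 0 0" using qform_nonneg_diag[OF psd] by simp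
  then have \<sigma>: "cnj \<sigma> = \<sigma>" "\<sigma> * \<sigma> = A 0 0"
    unfolding \<sigma>_def by (simp_all add: less_eq_complex_def complex_eq_iff flip: of_real_mult)
  have row0: "A 0 (Suc c) = 0" if "\<sigma> = 0" "c < n" for c
    using qform_nonneg_zero_diag[OF psd, of 0 "Suc c"] that \<sigma>(2) by simp
  have herm: "A (Suc r) 0 = cnj (A 0 (Suc r))" if "r < n" for r
    using qform_nonneg_hermitian[OF psd, of 0 "Suc r"] that by simp
  have split: "(\<Sum>p<Suc n. cnj (border_factor A L p r) * border_factor A L p c) =
      cnj (border_factor A L 0 r) * border_factor A L 0 c +
      (\<Sum>p<n. cnj (border_factor A L (Suc p) r) * border_factor A L (Suc p) c)"
    by (rule sum.lessThan_Suc_shift)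
  show ?thesis
  proof (cases r; cases c)
    assume "r = 0" "c = 0"
    then show ?thesis unfolding split using \<sigma> by (simp add: border_factor_def flip: \<sigma>_def)
  next
    fix c' assume "r = 0" "c = Suc c'"
    then show ?thesis unfolding split using \<sigma> row0 c
      by (cases "\<sigma> = 0") (simp_all add: border_factor_def flip: \<sigma>_def)
  next
    fix r' assume "r = Suc r'" "c = 0"
    then show ?thesis unfolding split using \<sigma> row0 r herm[of r']
      by (cases "\<sigma> = 0") (simp_all add: border_factor_def flip: \<sigma>_def)
  next
    fix r' c' assume rc: "r = Suc r'" "c = Suc c'"
    have "cnj (border_factor A L 0 r) * border_factor A L 0 c = cnj (A 0 (Suc r')) * A 0 (Suc c') / (\<sigma> * \<sigma>)"
      using rc \<sigma>(1) by (simp add: border_factor_def flip: \<sigma>_def)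
    then have "cnj (border_factor A L 0 r) * border_factor A L 0 c = A (Suc r') 0 * A 0 (Suc c') / A 0 0"
      using rc herm[of r'] r \<sigma>(2) by simp
    moreover have "(\<Sum>p<n. cnj (border_factor A L (Suc p) r) * border_factor A L (Suc p) c) =
        A (Suc r') (Suc c') - A (Suc r') 0 * A 0 (Suc c') / A 0 0"
      using rc r c L by (simp add: border_factor_def)
    ultimately show ?thesis unfolding split by (simp add: rc)
  qed
qed

lemma qform_nonneg_factorization:
  assumes "symp R" and "transp R"
    and "\<forall>r<n. \<forall>c<n. A r c \<noteq> 0 \<longrightarrow> R r c" and "\<forall>v. 0 \<le> qform n A v"
  shows "\<exists>L. (\<forall>r<n. \<forall>c<n. A r c = (\<Sum>p<n. cnj (L p r) * L p c)) \<and> (\<forall>r<n. \<forall>c<n. L r c \<noteq> 0 \<longrightarrow> R r c)"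
  using assms
proof (induction n arbitrary: A R)
  case 0
  then show ?case by simp
next
  case (Suc n)
  note pat = Suc.prems(3) and psd = Suc.prems(4)
  define A' where "A' = (\<lambda>r c. A (Suc r) (Suc c) - A (Suc r) 0 * A 0 (Suc c) / A 0 0)"
  define R' where "R' = (\<lambda>r c. R (Suc r) (Suc c))"
  have "symp R'" "transp R'"
    using Suc.prems(1,2) unfolding R'_def symp_def transp_def by blast+
  moreover have "\<forall>r<n. \<forall>c<n. A' r c \<noteq> 0 \<longrightarrow> R' r c"
  proof (intro allI impI)
    fix r c assume "r < n" "c < n" "A' r c \<noteq> 0"
    then have "R (Suc r) (Suc c) \<or> R (Suc r) 0 \<and> R 0 (Suc c)"
      using pat unfolding A'_def by (metis Suc_mono diff_zero divide_eq_0_iff mult_eq_0_iff zero_less_Suc)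
    then show "R' r c" using Suc.prems(2) unfolding R'_def transp_def by blast
  qed
  moreover have "\<forall>v. 0 \<le> qform n A' v"
    unfolding A'_def using qform_nonneg_schur_complement[OF psd] by blast
  ultimately obtain L' where L': "\<forall>r<n. \<forall>c<n. A' r c = (\<Sum>p<n. cnj (L' p r) * L' p c)"
      "\<forall>r<n. \<forall>c<n. L' r c \<noteq> 0 \<longrightarrow> R' r c"
    using Suc.IH by blast
  have "A r c = (\<Sum>p<Suc n. cnj (border_factor A L' p r) * border_factor A L' p c)"
    if "r < Suc n" "c < Suc n" for r c
    using border_factor_eq[OF psd] L'(1) that unfolding A'_def by blast
  moreover have "R r c" if "r < Suc n" "c < Suc n" "border_factor A L' r c \<noteq> 0" for r c
  proof -
    have "R 0 0" if "sqrt (Re (A 0 0)) \<noteq> 0" using pat that by fastforce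
    then show ?thesis
      using that pat L'(2) unfolding border_factor_def R'_def
      by (cases r; cases c) (auto split: nat.splits)
  qed
  ultimately show ?case by blast
qed

lemma off_Suc: "a < length ns \<Longrightarrow> off ns (Suc a) = off ns a + ns ! a"
  unfolding off_def by (simp add: take_Suc_conv_app_nth)

lemma off_mono: "a \<le> b \<Longrightarrow> off ns a \<le> off ns b"
  unfolding off_def by (metis append_take_drop_id le_add1 min.absorb1 sum_list_append take_take)

lemma off_add_le_tdim: "a < length ns \<Longrightarrow> off ns a + ns ! a \<le> tdim ns"
  using off_Suc[of a ns] off_mono[of "Suc a" "length ns" ns] unfolding off_def tdim_def by simp

lemma block_index_unique:
  assumes "a < length ns" "b < length ns" "off ns a \<le> i" "i < off ns a + ns ! a"
    "off ns b \<le> i" "i < off ns b + ns ! b"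
  shows "a = b"
proof (rule ccontr)
  assume "a \<noteq> b"
  then consider "Suc a \<le> b" | "Suc b \<le> a" by linarith
  then show False
    by cases (use assms off_Suc[of a ns] off_Suc[of b ns] off_mono[of "Suc a" b ns] off_mono[of "Suc b" a ns] in auto)
qed

lemma same_block_sym: "same_block ns i j \<Longrightarrow> same_block ns j i"
  unfolding same_block_def by blast

lemma same_block_trans: "same_block ns i j \<Longrightarrow> same_block ns j l \<Longrightarrow> same_block ns i l"
  unfolding same_block_def by (metis block_index_unique)

lemma symp_same_block: "symp (same_block ns)"
  by (auto intro: sympI same_block_sym)

lemma transp_same_block: "transp (same_block ns)"
  by (auto intro: transpI same_block_trans)

lemma same_block_less: "same_block ns i j \<Longrightarrow> i < tdim ns \<and> j < tdim ns"
  unfolding same_block_def using off_add_le_tdim by fastforce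

lemma same_block_refl: "i < tdim ns \<Longrightarrow> same_block ns i i"
proof (induction ns arbitrary: i)
  case (Cons x xs)
  show ?case
  proof (cases "i < x")
    case True
    then show ?thesis unfolding same_block_def by (intro exI[of _ 0]) (simp add: off_def)
  next
    case False
    then have "same_block xs (i - x) (i - x)" using Cons by (simp add: tdim_def)
    then obtain a where "a < length xs" "off xs a \<le> i - x" "i - x < off xs a + xs ! a"
      unfolding same_block_def by blast
    then show ?thesis unfolding same_block_def using False by (intro exI[of _ "Suc a"]) (auto simp: off_def)
  qed
qed (simp add: tdim_def)

definition block_rep :: "nat list \<Rightarrow> nat \<Rightarrow> nat" where
  "block_rep ns i = (LEAST p. same_block ns p i)"

lemma same_block_rep: "i < tdim ns \<Longrightarrow> same_block ns (block_rep ns i) i"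
  unfolding block_rep_def by (rule LeastI[of _ i]) (rule same_block_refl)

lemma block_rep_eq_iff:
  assumes "i < tdim ns" "j < tdim ns"
  shows "block_rep ns i = block_rep ns j \<longleftrightarrow> same_block ns i j"
proof
  assume "block_rep ns i = block_rep ns j"
  then show "same_block ns i j"
    using same_block_rep[OF assms(1)] same_block_rep[OF assms(2)] by (metis same_block_sym same_block_trans)
next
  assume "same_block ns i j"
  then have "same_block ns p i = same_block ns p j" for p by (metis same_block_sym same_block_trans)
  then show "block_rep ns i = block_rep ns j" unfolding block_rep_def by simp
qed

lemma msum_carrier: "(\<forall>g\<in>set gs. f g \<in> carrier_mat m m) \<Longrightarrow> msum m f gs \<in> carrier_mat m m"
  unfolding msum_def by (induction gs) auto

lemma index_msum:
  "(\<forall>g\<in>set gs. f g \<in> carrier_mat m m) \<Longrightarrow> r < m \<Longrightarrow> c < m \<Longrightarrow>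
   msum m f gs $$ (r,c) = (\<Sum>g\<leftarrow>gs. f g $$ (r,c))"
proof (induction gs)
  case (Cons g gs)
  then show ?case using msum_carrier[of gs f m] by (simp add: msum_def)
qed (simp add: msum_def)

lemma msum_cong: "(\<And>g. g \<in> set gs \<Longrightarrow> f g = h g) \<Longrightarrow> msum m f gs = msum m h gs"
  unfolding msum_def by (induction gs) auto

lemma adj_carrier: "A \<in> carrier_mat n m \<Longrightarrow> adj A \<in> carrier_mat m n"
  unfolding adj_def by simp

lemma index_adj: "i < dim_col A \<Longrightarrow> j < dim_row A \<Longrightarrow> adj A $$ (i,j) = cnj (A $$ (j,i))"
  unfolding adj_def by simp

lemma adj_adj: "adj (adj A) = A"
  unfolding adj_def by (rule eq_matI) auto

lemma index_mult_mat_sum: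
  "A \<in> carrier_mat n k \<Longrightarrow> B \<in> carrier_mat k m \<Longrightarrow> i < n \<Longrightarrow> j < m \<Longrightarrow>
   (A * B) $$ (i,j) = (\<Sum>p<k. A $$ (i,p) * B $$ (p,j))"
  by (simp add: scalar_prod_def atLeast0LessThan)

lemma index_adj_mult:
  "C \<in> carrier_mat k n \<Longrightarrow> i < n \<Longrightarrow> j < n \<Longrightarrow>
   (adj C * C) $$ (i,j) = (\<Sum>p<k. cnj (C $$ (p,i)) * C $$ (p,j))"
  by (simp add: index_mult_mat_sum[OF adj_carrier] index_adj)

lemma index_mult_adj:
  "C \<in> carrier_mat n k \<Longrightarrow> D \<in> carrier_mat n k \<Longrightarrow> i < n \<Longrightarrow> j < n \<Longrightarrow>
   (C * adj D) $$ (i,j) = (\<Sum>p<k. C $$ (i,p) * cnj (D $$ (j,p)))"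
  by (simp add: index_mult_mat_sum[OF _ adj_carrier] index_adj)

lemma blockalg_carrier: "x \<in> blockalg ns \<Longrightarrow> x \<in> carrier_mat (tdim ns) (tdim ns)"
  unfolding blockalg_def by simp

lemma blockalg_entry_zero:
  "x \<in> blockalg ns \<Longrightarrow> i < tdim ns \<Longrightarrow> j < tdim ns \<Longrightarrow> \<not> same_block ns i j \<Longrightarrow> x $$ (i,j) = 0"
  unfolding blockalg_def by simp

lemma blockalgI:
  "x \<in> carrier_mat (tdim ns) (tdim ns) \<Longrightarrow>
   (\<And>i j. i < tdim ns \<Longrightarrow> j < tdim ns \<Longrightarrow> \<not> same_block ns i j \<Longrightarrow> x $$ (i,j) = 0) \<Longrightarrow>
   x \<in> blockalg ns"
  unfolding blockalg_def by simp

lemma zero_blockalg: "0\<^sub>m (tdim ns) (tdim ns) \<in> blockalg ns"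
  by (rule blockalgI) auto

lemma add_blockalg: "x \<in> blockalg ns \<Longrightarrow> y \<in> blockalg ns \<Longrightarrow> x + y \<in> blockalg ns"
  by (auto simp: blockalg_def)

lemma smult_blockalg: "x \<in> blockalg ns \<Longrightarrow> c \<cdot>\<^sub>m x \<in> blockalg ns"
  by (auto simp: blockalg_def)

lemma adj_blockalg: "x \<in> blockalg ns \<Longrightarrow> adj x \<in> blockalg ns"
  using same_block_sym by (fastforce simp: blockalg_def adj_def)

lemma mult_blockalg:
  assumes "x \<in> blockalg ns" "y \<in> blockalg ns"
  shows "x * y \<in> blockalg ns"
proof (rule blockalgI)
  show "x * y \<in> carrier_mat (tdim ns) (tdim ns)" using assms by (auto dest!: blockalg_carrier)
next
  fix i j assume i: "i < tdim ns" and j: "j < tdim ns" and n: "\<not> same_block ns i j"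
  have zero: "x $$ (i,p) * y $$ (p,j) = 0" if "p < tdim ns" for p
    using assms that i j n same_block_trans blockalg_entry_zero by (metis mult_eq_0_iff)
  have "(x * y) $$ (i,j) = (\<Sum>p<tdim ns. x $$ (i,p) * y $$ (p,j))"
    using assms i j by (auto intro: index_mult_mat_sum blockalg_carrier)
  also have "\<dots> = 0" using zero by (intro sum.neutral) auto
  finally show "(x * y) $$ (i,j) = 0" .
qed

lemma msum_blockalg: "(\<forall>g\<in>set gs. f g \<in> blockalg ns) \<Longrightarrow> msum (tdim ns) f gs \<in> blockalg ns"
  by (induction gs) (auto simp: msum_def zero_blockalg add_blockalg)

lemma munit_blockalg: "same_block ns i j \<Longrightarrow> munit (tdim ns) i j \<in> blockalg ns"
  by (rule blockalgI) (auto simp: munit_def)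

definition adj_vec_mult :: "nat \<Rightarrow> (nat \<Rightarrow> complex) \<Rightarrow> complex mat \<Rightarrow> nat \<Rightarrow> complex" where
  "adj_vec_mult m u X q = (\<Sum>r<m. cnj (u r) * X $$ (r,q))"

definition sesq_form :: "nat \<Rightarrow> (nat \<Rightarrow> complex) \<Rightarrow> complex mat \<Rightarrow> (nat \<Rightarrow> complex) \<Rightarrow> complex" where
  "sesq_form m u Y w = (\<Sum>p<m. \<Sum>q<m. cnj (u p) * Y $$ (p,q) * w q)"

lemma sesq_form_cong:
  "(\<And>p. p < m \<Longrightarrow> u p = u' p) \<Longrightarrow> (\<And>q. q < m \<Longrightarrow> w q = w' q) \<Longrightarrow> sesq_form m u Y w = sesq_form m u' Y w'"
  unfolding sesq_form_def by (intro sum.cong refl) auto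

lemma qform_mult_adj:
  assumes "X \<in> carrier_mat m k" and "Y \<in> carrier_mat m k"
  shows "qform m (\<lambda>r c. (X * adj Y) $$ (r,c)) u = (\<Sum>q<k. adj_vec_mult m u X q * cnj (adj_vec_mult m u Y q))"
proof -
  have "qform m (\<lambda>r c. (X * adj Y) $$ (r,c)) u
      = (\<Sum>r<m. \<Sum>c<m. \<Sum>q<k. (cnj (u r) * X $$ (r,q)) * (cnj (Y $$ (c,q)) * u c))"
    unfolding qform_def using assms
    by (intro sum.cong refl) (simp add: index_mult_adj sum_distrib_left sum_distrib_right mult_ac)
  also have "\<dots> = (\<Sum>r<m. \<Sum>q<k. \<Sum>c<m. (cnj (u r) * X $$ (r,q)) * (cnj (Y $$ (c,q)) * u c))"
    by (intro sum.cong refl sum.swap)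
  also have "\<dots> = (\<Sum>q<k. \<Sum>r<m. \<Sum>c<m. (cnj (u r) * X $$ (r,q)) * (cnj (Y $$ (c,q)) * u c))"
    by (rule sum.swap)
  also have "\<dots> = (\<Sum>q<k. adj_vec_mult m u X q * cnj (adj_vec_mult m u Y q))"
    unfolding adj_vec_mult_def by (simp add: sum_distrib_left sum_distrib_right mult_ac)
  finally show ?thesis .
qed

lemma qform_mult_adj_nonneg:
  "a \<in> carrier_mat m k \<Longrightarrow> 0 \<le> qform m (\<lambda>r c. (a * adj a) $$ (r,c)) u"
  unfolding qform_mult_adj by (intro sum_nonneg) (simp add: less_eq_complex_def)

lemma qform_adj_mult_nonneg:
  assumes "C \<in> carrier_mat k n"
  shows "0 \<le> qform n (\<lambda>r c. (adj C * C) $$ (r,c)) v"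
  using qform_mult_adj_nonneg[OF adj_carrier[OF assms]] by (simp add: adj_adj)

lemma adj_vec_mult_mult:
  assumes "X \<in> carrier_mat m k" and "Y \<in> carrier_mat k l" and "q < l"
  shows "adj_vec_mult m u (X * Y) q = (\<Sum>p<k. adj_vec_mult m u X p * Y $$ (p,q))"
proof -
  have "adj_vec_mult m u (X * Y) q = (\<Sum>r<m. \<Sum>p<k. cnj (u r) * X $$ (r,p) * Y $$ (p,q))"
    unfolding adj_vec_mult_def using assms
    by (intro sum.cong refl) (simp add: index_mult_mat_sum sum_distrib_left mult_ac del: index_mult_mat)
  then show ?thesis
    unfolding adj_vec_mult_def sum_distrib_right by (subst (asm) sum.swap)
qed

lemma adj_vec_mult_msum:
  assumes "\<forall>g\<in>set gs. f g \<in> carrier_mat m m" and "q < m"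
  shows "adj_vec_mult m u (msum m f gs) q = (\<Sum>g\<leftarrow>gs. adj_vec_mult m u (f g) q)"
proof -
  have "adj_vec_mult m u (msum m f gs) q = (\<Sum>r<m. cnj (u r) * (\<Sum>g\<leftarrow>gs. f g $$ (r,q)))"
    unfolding adj_vec_mult_def using assms by (intro sum.cong refl) (simp add: index_msum)
  also have "\<dots> = (\<Sum>g\<leftarrow>gs. adj_vec_mult m u (f g) q)"
    unfolding adj_vec_mult_def by (induction gs) (simp_all add: algebra_simps sum.distrib)
  finally show ?thesis .
qed

lemma mult_add_less_mult:
  assumes "i < k" "p < n"
  shows "i * n + p < k * (n::nat)"
proof -
  have "i * n + p < Suc i * n" using assms by simp
  also have "\<dots> \<le> k * n" using assms by (intro mult_le_mono1) simp
  finally show ?thesis .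
qed

lemma blockmat_carrier: "blockmat k n X \<in> carrier_mat (k * n) (k * n)"
  unfolding blockmat_def by simp

lemma index_blockmat:
  "i < k \<Longrightarrow> j < k \<Longrightarrow> p < n \<Longrightarrow> q < n \<Longrightarrow> blockmat k n X $$ (i*n+p, j*n+q) = X i j $$ (p,q)"
  unfolding blockmat_def by (simp add: mult_add_less_mult)

lemma mat_eq_blockwiseI:
  assumes "A \<in> carrier_mat (k * n) (k * n)" and "B \<in> carrier_mat (k * n) (k * n)"
    and "\<And>i j p q. i < k \<Longrightarrow> j < k \<Longrightarrow> p < n \<Longrightarrow> q < n \<Longrightarrow> A $$ (i*n+p, j*n+q) = B $$ (i*n+p, j*n+q)"
  shows "A = B"
proof (rule eq_matI)
  fix r c assume "r < dim_row B" "c < dim_col B"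
  then have "r < k * n" "c < k * n" using assms(2) by auto
  moreover have "n > 0" using \<open>r < k * n\<close> by (cases n) auto
  ultimately have "A $$ ((r div n)*n + r mod n, (c div n)*n + c mod n) = B $$ ((r div n)*n + r mod n, (c div n)*n + c mod n)"
    by (intro assms(3)) (auto simp: less_mult_imp_div_less mult.commute)
  then show "A $$ (r,c) = B $$ (r,c)" by simp
qed (use assms in auto)

lemma index_adj_blockmat_mult:
  assumes "i < k" "j < k" "r < n" "s < n"
  shows "(adj (blockmat k n B) * blockmat k n B) $$ (i*n+r, j*n+s) = (\<Sum>l<k. \<Sum>t<n. cnj (B l i $$ (t,r)) * B l j $$ (t,s))"
proof -
  have "(adj (blockmat k n B) * blockmat k n B) $$ (i*n+r, j*n+s)
      = (\<Sum>P<k*n. cnj (blockmat k n B $$ (P, i*n+r)) * blockmat k n B $$ (P, j*n+s))"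
    using assms by (intro index_adj_mult[OF blockmat_carrier] mult_add_less_mult)
  also have "\<dots> = (\<Sum>l<k. \<Sum>t<n. cnj (blockmat k n B $$ (l*n+t, i*n+r)) * blockmat k n B $$ (l*n+t, j*n+s))"
    by (rule sum_mult_lessThan_split)
  also have "\<dots> = (\<Sum>l<k. \<Sum>t<n. cnj (B l i $$ (t,r)) * B l j $$ (t,s))"
    using assms by (intro sum.cong refl) (simp add: index_blockmat)
  finally show ?thesis .
qed

lemma qform_blockmat:
  "qform (k*n) (\<lambda>r c. blockmat k n X $$ (r,c)) V =
     (\<Sum>i<k. \<Sum>j<k. sesq_form n (\<lambda>p. V (i*n+p)) (X i j) (\<lambda>q. V (j*n+q)))"
proof -
  have "qform (k*n) (\<lambda>r c. blockmat k n X $$ (r,c)) V =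
     (\<Sum>i<k. \<Sum>p<n. \<Sum>j<k. \<Sum>q<n. cnj (V (i*n+p)) * X i j $$ (p,q) * V (j*n+q))"
    unfolding qform_def sum_mult_lessThan_split by (intro sum.cong refl) (simp add: index_blockmat)
  also have "\<dots> = (\<Sum>i<k. \<Sum>j<k. \<Sum>p<n. \<Sum>q<n. cnj (V (i*n+p)) * X i j $$ (p,q) * V (j*n+q))"
    by (intro sum.cong refl sum.swap)
  finally show ?thesis unfolding sesq_form_def .
qed

section \<open>Positivity in the block-diagonal algebras\<close>

lemma qform_nonneg_eq_adj_mult:
  assumes G: "G \<in> carrier_mat m m" and "symp R" and "transp R"
    and pat: "\<forall>r<m. \<forall>c<m. G $$ (r,c) \<noteq> 0 \<longrightarrow> R r c"
    and psd: "\<forall>v. 0 \<le> qform m (\<lambda>r c. G $$ (r,c)) v"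
  shows "\<exists>L\<in>carrier_mat m m. G = adj L * L \<and> (\<forall>r<m. \<forall>c<m. L $$ (r,c) \<noteq> 0 \<longrightarrow> R r c)"
proof -
  obtain F where F: "\<forall>r<m. \<forall>c<m. G $$ (r,c) = (\<Sum>p<m. cnj (F p r) * F p c)"
      "\<forall>r<m. \<forall>c<m. F r c \<noteq> 0 \<longrightarrow> R r c"
    using qform_nonneg_factorization[OF assms(2,3) pat psd] by blast
  define L where "L = mat m m (\<lambda>(r,c). F r c)"
  have L: "L \<in> carrier_mat m m" unfolding L_def by simp
  have "G = adj L * L"
  proof (rule eq_matI)
    fix r c assume "r < dim_row (adj L * L)" "c < dim_col (adj L * L)"
    then have rc: "r < m" "c < m" using L by (auto simp: adj_def)
    then have "(adj L * L) $$ (r,c) = (\<Sum>p<m. cnj (L $$ (p,r)) * L $$ (p,c))"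
      by (rule index_adj_mult[OF L])
    also have "\<dots> = G $$ (r,c)" using F(1) rc by (simp add: L_def)
    finally show "G $$ (r,c) = (adj L * L) $$ (r,c)" ..
  qed (use G L in \<open>auto simp: adj_def\<close>)
  then show ?thesis using L F(2) by (auto simp: L_def)
qed

lemma cstar_pos_blockalg_op_iff:
  assumes G: "G \<in> blockalg ns"
  shows "cstar_pos (blockalg ns) op_mult G \<longleftrightarrow> (\<forall>u. 0 \<le> qform (tdim ns) (\<lambda>r c. G $$ (r,c)) u)"
proof
  assume "cstar_pos (blockalg ns) op_mult G"
  then obtain a where "a \<in> blockalg ns" "G = a * adj a"
    unfolding cstar_pos_def op_mult_def by blast
  then show "\<forall>u. 0 \<le> qform (tdim ns) (\<lambda>r c. G $$ (r,c)) u"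
    using qform_mult_adj_nonneg blockalg_carrier by blast
next
  assume "\<forall>u. 0 \<le> qform (tdim ns) (\<lambda>r c. G $$ (r,c)) u"
  then obtain L where L: "L \<in> carrier_mat (tdim ns) (tdim ns)" "G = adj L * L"
      "\<forall>r<tdim ns. \<forall>c<tdim ns. L $$ (r,c) \<noteq> 0 \<longrightarrow> same_block ns r c"
    using qform_nonneg_eq_adj_mult[OF blockalg_carrier[OF G] symp_same_block transp_same_block]
      blockalg_entry_zero[OF G] by blast
  then have "adj L \<in> blockalg ns" by (auto intro: adj_blockalg blockalgI)
  then show "cstar_pos (blockalg ns) op_mult G"
    unfolding cstar_pos_def op_mult_def using L(2) by (intro bexI[of _ "adj L"]) (auto simp: adj_adj)
qed

lemma blockmat_nonzero_same_block:
  assumes X: "\<forall>i<k. \<forall>j<k. X i j \<in> blockalg ns"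
    and rc: "r < k * tdim ns" "c < k * tdim ns" and "blockmat k (tdim ns) X $$ (r,c) \<noteq> 0"
  shows "same_block ns (r mod tdim ns) (c mod tdim ns)"
proof -
  let ?n = "tdim ns"
  have "X (r div ?n) (c div ?n) $$ (r mod ?n, c mod ?n) \<noteq> 0"
    using assms unfolding blockmat_def by simp
  moreover have "?n > 0" using rc by (cases ?n) auto
  then have "r div ?n < k" "c div ?n < k" "r mod ?n < ?n" "c mod ?n < ?n"
    using rc by (auto simp: less_mult_imp_div_less mult.commute)
  ultimately show ?thesis using X blockalg_entry_zero by blast
qed

lemma Mk_blockalgI:
  assumes L: "L \<in> carrier_mat (k * tdim ns) (k * tdim ns)"
    and pat: "\<forall>r<k * tdim ns. \<forall>c<k * tdim ns. L $$ (r,c) \<noteq> 0 \<longrightarrow> same_block ns (r mod tdim ns) (c mod tdim ns)"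
  shows "L \<in> Mk k (tdim ns) (blockalg ns)"
proof -
  let ?n = "tdim ns"
  define C where "C = (\<lambda>i j. mat ?n ?n (\<lambda>(p,q). L $$ (i * ?n + p, j * ?n + q)))"
  have "L = blockmat k ?n C"
  proof (rule mat_eq_blockwiseI[OF L blockmat_carrier])
    fix i j p q assume "i < k" "j < k" "p < ?n" "q < ?n"
    then show "L $$ (i * ?n + p, j * ?n + q) = blockmat k ?n C $$ (i * ?n + p, j * ?n + q)"
      by (subst index_blockmat) (simp_all add: C_def)
  qed
  moreover have "C i j \<in> blockalg ns" if "i < k" "j < k" for i j
  proof (rule blockalgI)
    fix p q assume "p < ?n" "q < ?n" "\<not> same_block ns p q"
    moreover have "(i * ?n + p) mod ?n = p" "(j * ?n + q) mod ?n = q" using \<open>p < ?n\<close> \<open>q < ?n\<close> by simp_all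
    ultimately show "C i j $$ (p,q) = 0"
      using that pat mult_add_less_mult unfolding C_def by (metis index_mat(1) prod.simps(2))
  qed (simp add: C_def)
  ultimately show ?thesis unfolding Mk_def by blast
qed

lemma cstar_pos_Mk_iff:
  assumes X: "\<forall>i<k. \<forall>j<k. X i j \<in> blockalg ns"
  shows "cstar_pos (Mk k (tdim ns) (blockalg ns)) (*) (blockmat k (tdim ns) X) \<longleftrightarrow>
    (\<forall>v. 0 \<le> qform (k * tdim ns) (\<lambda>r c. blockmat k (tdim ns) X $$ (r,c)) v)"
    (is "?pos \<longleftrightarrow> ?psd")
proof
  assume ?pos
  then obtain B where "blockmat k (tdim ns) X = adj (blockmat k (tdim ns) B) * blockmat k (tdim ns) B"
    unfolding cstar_pos_def Mk_def by blast
  then show ?psd using qform_adj_mult_nonneg[OF blockmat_carrier] by metis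
next
  let ?R = "\<lambda>r c. same_block ns (r mod tdim ns) (c mod tdim ns)"
  assume ?psd
  moreover have "symp ?R" "transp ?R"
    using symp_same_block transp_same_block unfolding symp_def transp_def by blast+
  ultimately obtain L where "L \<in> carrier_mat (k * tdim ns) (k * tdim ns)" "blockmat k (tdim ns) X = adj L * L"
      "\<forall>r<k * tdim ns. \<forall>c<k * tdim ns. L $$ (r,c) \<noteq> 0 \<longrightarrow> ?R r c"
    using qform_nonneg_eq_adj_mult[OF blockmat_carrier] blockmat_nonzero_same_block[OF X] by blast
  then show ?pos unfolding cstar_pos_def using Mk_blockalgI by blast
qed

section \<open>The Choi form\<close>

lemma blockalg_eq_msum_munit:
  assumes y: "y \<in> blockalg ns"
  shows "y = msum (tdim ns) (\<lambda>r. msum (tdim ns) (\<lambda>s. y $$ (r,s) \<cdot>\<^sub>m munit (tdim ns) r s)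
                 (filter (same_block ns r) [0..<tdim ns])) [0..<tdim ns]"
    (is "y = ?S")
proof -
  let ?N = "tdim ns"
  have inner: "msum ?N (\<lambda>s. y $$ (r,s) \<cdot>\<^sub>m munit ?N r s) (filter (same_block ns r) [0..<?N]) \<in> carrier_mat ?N ?N" for r
    by (rule msum_carrier) (auto simp: munit_def)
  have S: "?S \<in> carrier_mat ?N ?N" using inner by (intro msum_carrier) auto
  show ?thesis
  proof (rule eq_matI)
    fix a b assume "a < dim_row ?S" "b < dim_col ?S"
    then have ab: "a < ?N" "b < ?N" using S by auto
    have "?S $$ (a,b) = (\<Sum>r<?N. \<Sum>s<?N. if same_block ns r s then y $$ (r,s) * (if a = r \<and> b = s then 1 else 0) else 0)"
      using ab inner by (simp add: index_msum sum_list_map_upt sum_list_map_filter_upt munit_def)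
    also have "\<dots> = (\<Sum>r<?N. \<Sum>s<?N. if r = a then if s = b then (if same_block ns a b then y $$ (a,b) else 0) else 0 else 0)"
      by (intro sum.cong refl) auto
    also have "\<dots> = (\<Sum>r<?N. if r = a then \<Sum>s<?N. if s = b then (if same_block ns a b then y $$ (a,b) else 0) else 0 else 0)"
      by (intro sum.cong refl) auto
    also have "\<dots> = (if same_block ns a b then y $$ (a,b) else 0)"
      using ab by simp
    also have "\<dots> = y $$ (a,b)" using blockalg_entry_zero[OF y ab] by auto
    finally show "y $$ (a,b) = ?S $$ (a,b)" by simp
  qed (use S blockalg_carrier[OF y] in auto)
qed

lemma sesq_form_sum:
  "sesq_form m (\<lambda>p. \<Sum>i\<in>I. a i * u i p) Y (\<lambda>q. \<Sum>j\<in>J. b j * w j q) =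
   (\<Sum>i\<in>I. \<Sum>j\<in>J. cnj (a i) * b j * sesq_form m (u i) Y (w j))"
proof -
  have "sesq_form m (\<lambda>p. \<Sum>i\<in>I. a i * u i p) Y (\<lambda>q. \<Sum>j\<in>J. b j * w j q) =
     (\<Sum>p<m. \<Sum>q<m. \<Sum>i\<in>I. \<Sum>j\<in>J. cnj (a i) * b j * (cnj (u i p) * Y $$ (p,q) * w j q))"
    unfolding sesq_form_def by (simp add: cnj_sum sum_distrib_left sum_distrib_right mult_ac)
  also have "\<dots> = (\<Sum>i\<in>I. \<Sum>j\<in>J. \<Sum>p<m. \<Sum>q<m. cnj (a i) * b j * (cnj (u i p) * Y $$ (p,q) * w j q))"
    by (rule sum_swap_pairs)
  finally show ?thesis unfolding sesq_form_def by (simp add: sum_distrib_left)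
qed

lemma qform_mod_inner:
  assumes "\<forall>g<tdim ns. \<xi> g \<in> carrier_mat (tdim ms) (tdim ms)"
    and "\<forall>g<tdim ns. \<eta> g \<in> carrier_mat (tdim ms) (tdim ms)"
  shows "qform (tdim ms) (\<lambda>r c. mod_inner ns ms \<xi> \<eta> $$ (r,c)) u =
    (\<Sum>g<tdim ns. \<Sum>q<tdim ms. adj_vec_mult (tdim ms) u (\<eta> g) q * cnj (adj_vec_mult (tdim ms) u (\<xi> g) q))"
proof -
  have "\<forall>g\<in>set [0..<tdim ns]. \<eta> g * adj (\<xi> g) \<in> carrier_mat (tdim ms) (tdim ms)"
    using assms by (auto intro!: mult_carrier_mat adj_carrier)
  then have "qform (tdim ms) (\<lambda>r c. mod_inner ns ms \<xi> \<eta> $$ (r,c)) u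
      = qform (tdim ms) (\<lambda>r c. \<Sum>g<tdim ns. (\<eta> g * adj (\<xi> g)) $$ (r,c)) u"
    unfolding mod_inner_def op_mult_def by (intro qform_cong) (simp add: index_msum sum_list_map_upt)
  also have "\<dots> = (\<Sum>g<tdim ns. qform (tdim ms) (\<lambda>r c. (\<eta> g * adj (\<xi> g)) $$ (r,c)) u)"
    by (rule qform_sum)
  also have "\<dots> = (\<Sum>g<tdim ns. \<Sum>q<tdim ms. adj_vec_mult (tdim ms) u (\<eta> g) q * cnj (adj_vec_mult (tdim ms) u (\<xi> g) q))"
    using assms by (intro sum.cong refl qform_mult_adj) auto
  finally show ?thesis .
qed

lemma choi_matrix_cstar_pos:
  "cstar_pos (Mk (tdim ns) (tdim ns) (blockalg ns)) (*)
     (blockmat (tdim ns) (tdim ns) (\<lambda>j g. if same_block ns j g then munit (tdim ns) j g else 0\<^sub>m (tdim ns) (tdim ns)))"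
proof -
  let ?N = "tdim ns"
  define X where "X = (\<lambda>j g. if same_block ns j g then munit ?N j g else 0\<^sub>m ?N ?N)"
  \<comment> \<open>The Choi matrix is \<open>b\<^sup>* b\<close> for the block row \<open>b\<close> with entries \<open>e\<^bsub>rep i, i\<^esub>\<close>.\<close>
  define B where "B = (\<lambda>(l::nat) i. if l = 0 then munit ?N (block_rep ns i) i else 0\<^sub>m ?N ?N)"
  have "B l i \<in> blockalg ns" if "i < ?N" for l i
    using that same_block_rep by (auto simp: B_def munit_blockalg zero_blockalg)
  moreover have "blockmat ?N ?N X = adj (blockmat ?N ?N B) * blockmat ?N ?N B"
  proof (rule mat_eq_blockwiseI)
    fix j g r s assume jg: "j < ?N" "g < ?N" and rs: "r < ?N" "s < ?N"
    have "(adj (blockmat ?N ?N B) * blockmat ?N ?N B) $$ (j * ?N + r, g * ?N + s)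
        = (\<Sum>l<?N. \<Sum>t<?N. cnj (B l j $$ (t,r)) * B l g $$ (t,s))"
      using jg rs by (rule index_adj_blockmat_mult)
    also have "\<dots> = (\<Sum>l<?N. if l = 0 then \<Sum>t<?N. (if t = block_rep ns j \<and> r = j then 1 else 0) *
        (if t = block_rep ns g \<and> s = g then 1 else 0) else 0)"
      using jg rs by (intro sum.cong refl) (auto simp: B_def munit_def intro!: sum.cong)
    also have "\<dots> = (\<Sum>t<?N. (if t = block_rep ns j \<and> r = j then 1 else 0) *
        (if t = block_rep ns g \<and> s = g then 1 else 0))"
      using jg by simp
    also have "\<dots> = (\<Sum>t<?N. if t = block_rep ns j then (if r = j \<and> s = g \<and> block_rep ns j = block_rep ns g then 1 else 0) else 0)"
      by (intro sum.cong refl) auto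
    also have "\<dots> = X j g $$ (r,s)"
      using jg rs same_block_less[OF same_block_rep] block_rep_eq_iff[OF jg] by (auto simp: X_def munit_def)
    finally show "blockmat ?N ?N X $$ (j * ?N + r, g * ?N + s) =
        (adj (blockmat ?N ?N B) * blockmat ?N ?N B) $$ (j * ?N + r, g * ?N + s)"
      using jg rs by (simp add: index_blockmat)
  qed (auto intro!: mult_carrier_mat adj_carrier blockmat_carrier)
  ultimately show ?thesis unfolding cstar_pos_def Mk_def X_def by blast
qed

locale blockalg_map =
  fixes ns ms :: "nat list" and \<Phi> :: "complex mat \<Rightarrow> complex mat"
  assumes linear: "linear_on (blockalg ns) \<Phi>"
    and maps_to: "\<Phi> ` blockalg ns \<subseteq> blockalg ms"
begin

lemma Phi_blockalg: "x \<in> blockalg ns \<Longrightarrow> \<Phi> x \<in> blockalg ms"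
  using maps_to by blast

lemma Phi_add: "x \<in> blockalg ns \<Longrightarrow> y \<in> blockalg ns \<Longrightarrow> \<Phi> (x + y) = \<Phi> x + \<Phi> y"
  using linear unfolding linear_on_def by blast

lemma Phi_smult: "x \<in> blockalg ns \<Longrightarrow> \<Phi> (c \<cdot>\<^sub>m x) = c \<cdot>\<^sub>m \<Phi> x"
  using linear unfolding linear_on_def by blast

lemma Phi_zero: "\<Phi> (0\<^sub>m (tdim ns) (tdim ns)) = 0\<^sub>m (tdim ms) (tdim ms)"
proof -
  have "\<Phi> (0\<^sub>m (tdim ns) (tdim ns)) = \<Phi> (0 \<cdot>\<^sub>m 0\<^sub>m (tdim ns) (tdim ns))" by simp
  also have "\<dots> = 0 \<cdot>\<^sub>m \<Phi> (0\<^sub>m (tdim ns) (tdim ns))" by (rule Phi_smult[OF zero_blockalg])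
  also have "\<dots> = 0\<^sub>m (tdim ms) (tdim ms)"
    using blockalg_carrier[OF Phi_blockalg[OF zero_blockalg]] by auto
  finally show ?thesis .
qed

lemma Phi_msum:
  "(\<forall>g\<in>set gs. f g \<in> blockalg ns) \<Longrightarrow> \<Phi> (msum (tdim ns) f gs) = msum (tdim ms) (\<lambda>g. \<Phi> (f g)) gs"
  by (induction gs) (simp_all add: msum_def Phi_zero Phi_add msum_blockalg[unfolded msum_def])

lemma index_Phi:
  assumes y: "y \<in> blockalg ns" and pq: "p < tdim ms" "q < tdim ms"
  shows "\<Phi> y $$ (p,q) = (\<Sum>r<tdim ns. \<Sum>s<tdim ns. y $$ (r,s) * \<Phi> (munit (tdim ns) r s) $$ (p,q))"
proof -
  let ?N = "tdim ns" and ?M = "tdim ms"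
  let ?blk = "\<lambda>r. filter (same_block ns r) [0..<?N]"
  have unit: "\<Phi> (munit ?N r s) \<in> carrier_mat ?M ?M" if "same_block ns r s" for r s
    using blockalg_carrier[OF Phi_blockalg[OF munit_blockalg[OF that]]] .
  then have smult_unit: "\<forall>s\<in>set (?blk r). y $$ (r,s) \<cdot>\<^sub>m \<Phi> (munit ?N r s) \<in> carrier_mat ?M ?M" for r
    by simp
  have terms: "\<forall>s\<in>set (?blk r). y $$ (r,s) \<cdot>\<^sub>m munit ?N r s \<in> blockalg ns" for r
    by (auto intro: smult_blockalg munit_blockalg)
  have "\<Phi> y = msum ?M (\<lambda>r. \<Phi> (msum ?N (\<lambda>s. y $$ (r,s) \<cdot>\<^sub>m munit ?N r s) (?blk r))) [0..<?N]"
    by (subst blockalg_eq_msum_munit[OF y]) (intro Phi_msum ballI msum_blockalg terms)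
  also have "\<dots> = msum ?M (\<lambda>r. msum ?M (\<lambda>s. y $$ (r,s) \<cdot>\<^sub>m \<Phi> (munit ?N r s)) (?blk r)) [0..<?N]"
    by (intro msum_cong) (auto simp: Phi_msum[OF terms] intro!: msum_cong Phi_smult munit_blockalg)
  finally have "\<Phi> y $$ (p,q) = (\<Sum>r<?N. \<Sum>s<?N. if same_block ns r s then (y $$ (r,s) \<cdot>\<^sub>m \<Phi> (munit ?N r s)) $$ (p,q) else 0)"
    using pq smult_unit msum_carrier[OF smult_unit]
    by (simp add: index_msum sum_list_map_upt sum_list_map_filter_upt)
  also have "\<dots> = (\<Sum>r<?N. \<Sum>s<?N. y $$ (r,s) * \<Phi> (munit ?N r s) $$ (p,q))"
  proof (intro sum.cong refl)
    fix r s assume "r \<in> {..<?N}" "s \<in> {..<?N}"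
    then show "(if same_block ns r s then (y $$ (r,s) \<cdot>\<^sub>m \<Phi> (munit ?N r s)) $$ (p,q) else 0) =
        y $$ (r,s) * \<Phi> (munit ?N r s) $$ (p,q)"
      using blockalg_entry_zero[OF y] carrier_matD[OF unit] pq by auto
  qed
  finally show ?thesis .
qed

lemma sesq_form_Phi:
  assumes "y \<in> blockalg ns"
  shows "sesq_form (tdim ms) u (\<Phi> y) w =
    (\<Sum>r<tdim ns. \<Sum>s<tdim ns. y $$ (r,s) * sesq_form (tdim ms) u (\<Phi> (munit (tdim ns) r s)) w)"
proof -
  let ?N = "tdim ns" and ?M = "tdim ms"
  have "sesq_form ?M u (\<Phi> y) w =
      (\<Sum>p<?M. \<Sum>q<?M. \<Sum>r<?N. \<Sum>s<?N. y $$ (r,s) * (cnj (u p) * \<Phi> (munit ?N r s) $$ (p,q) * w q))"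
    unfolding sesq_form_def using assms
    by (intro sum.cong refl) (simp add: index_Phi sum_distrib_left sum_distrib_right mult_ac)
  also have "\<dots> = (\<Sum>r<?N. \<Sum>s<?N. \<Sum>p<?M. \<Sum>q<?M. y $$ (r,s) * (cnj (u p) * \<Phi> (munit ?N r s) $$ (p,q) * w q))"
    by (rule sum_swap_pairs)
  finally show ?thesis unfolding sesq_form_def by (simp add: sum_distrib_left)
qed

definition choi_form :: "(nat \<Rightarrow> nat \<Rightarrow> complex) \<Rightarrow> complex" where
  "choi_form y = (\<Sum>r<tdim ns. \<Sum>s<tdim ns.
     if same_block ns r s then sesq_form (tdim ms) (y r) (\<Phi> (munit (tdim ns) r s)) (y s) else 0)"

lemma C_op_blockalg:
  assumes "\<xi> \<in> Mmod ns ms" and "g < tdim ns"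
  shows "C_op ns ms \<Phi> \<xi> g \<in> blockalg ms"
  using assms unfolding C_op_def op_mult_def Mmod_def
  by (auto intro!: msum_blockalg mult_blockalg Phi_blockalg munit_blockalg dest: same_block_sym)

lemma mod_inner_C_op_blockalg:
  assumes "\<xi> \<in> Mmod ns ms"
  shows "mod_inner ns ms \<xi> (C_op ns ms \<Phi> \<xi>) \<in> blockalg ms"
  using assms C_op_blockalg unfolding mod_inner_def op_mult_def Mmod_def
  by (auto intro!: msum_blockalg mult_blockalg adj_blockalg)

lemma adj_vec_mult_C_op:
  assumes \<xi>: "\<xi> \<in> Mmod ns ms" and g: "g < tdim ns" and q: "q < tdim ms"
  shows "adj_vec_mult (tdim ms) u (C_op ns ms \<Phi> \<xi> g) q =
    (\<Sum>j<tdim ns. if same_block ns j g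
       then \<Sum>p<tdim ms. adj_vec_mult (tdim ms) u (\<xi> j) p * \<Phi> (munit (tdim ns) j g) $$ (p,q) else 0)"
proof -
  let ?N = "tdim ns" and ?M = "tdim ms"
  have carrier: "\<xi> j \<in> carrier_mat ?M ?M" "\<Phi> (munit ?N j g) \<in> carrier_mat ?M ?M"
    if "same_block ns g j" for j
    using that \<xi> unfolding Mmod_def
    by (auto intro!: blockalg_carrier Phi_blockalg munit_blockalg dest: same_block_sym same_block_less)
  have "adj_vec_mult ?M u (C_op ns ms \<Phi> \<xi> g) q =
      (\<Sum>j\<leftarrow>filter (same_block ns g) [0..<?N]. adj_vec_mult ?M u (\<xi> j * \<Phi> (munit ?N j g)) q)"
    unfolding C_op_def op_mult_def using g q carrier
    by (simp only: if_True) (intro adj_vec_mult_msum, auto intro!: mult_carrier_mat)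
  also have "\<dots> = (\<Sum>j<?N. if same_block ns g j then adj_vec_mult ?M u (\<xi> j * \<Phi> (munit ?N j g)) q else 0)"
    by (rule sum_list_map_filter_upt)
  also have "\<dots> = (\<Sum>j<?N. if same_block ns j g
       then \<Sum>p<?M. adj_vec_mult ?M u (\<xi> j) p * \<Phi> (munit ?N j g) $$ (p,q) else 0)"
  proof (intro sum.cong refl)
    fix j
    show "(if same_block ns g j then adj_vec_mult ?M u (\<xi> j * \<Phi> (munit ?N j g)) q else 0) =
        (if same_block ns j g then \<Sum>p<?M. adj_vec_mult ?M u (\<xi> j) p * \<Phi> (munit ?N j g) $$ (p,q) else 0)"
    proof (cases "same_block ns g j")
      case True
      then show ?thesis
        using adj_vec_mult_mult[OF carrier[OF True] q] same_block_sym[OF True] by simp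
    qed (use same_block_sym in auto)
  qed
  finally show ?thesis .
qed

lemma choi_form_cong:
  "(\<And>r p. r < tdim ns \<Longrightarrow> p < tdim ms \<Longrightarrow> y r p = y' r p) \<Longrightarrow> choi_form y = choi_form y'"
  unfolding choi_form_def sesq_form_def by (intro sum.cong refl) auto

lemma qform_mod_inner_C_op:
  assumes \<xi>: "\<xi> \<in> Mmod ns ms"
  shows "qform (tdim ms) (\<lambda>r c. mod_inner ns ms \<xi> (C_op ns ms \<Phi> \<xi>) $$ (r,c)) u =
    choi_form (\<lambda>j p. cnj (adj_vec_mult (tdim ms) u (\<xi> j) p))"
proof -
  let ?N = "tdim ns" and ?M = "tdim ms"
  define z where "z = (\<lambda>j p. adj_vec_mult ?M u (\<xi> j) p)"
  define E where "E = (\<lambda>j g. \<Phi> (munit ?N j g))"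
  have "qform ?M (\<lambda>r c. mod_inner ns ms \<xi> (C_op ns ms \<Phi> \<xi>) $$ (r,c)) u =
      (\<Sum>g<?N. \<Sum>q<?M. adj_vec_mult ?M u (C_op ns ms \<Phi> \<xi> g) q * cnj (z g q))"
    unfolding z_def using \<xi> C_op_blockalg
    by (intro qform_mod_inner) (auto simp: Mmod_def blockalg_carrier)
  also have "\<dots> = (\<Sum>g<?N. \<Sum>q<?M. \<Sum>j<?N. \<Sum>p<?M.
      if same_block ns j g then z j p * E j g $$ (p,q) * cnj (z g q) else 0)"
    unfolding z_def E_def using \<xi>
    by (intro sum.cong refl) (simp add: adj_vec_mult_C_op sum_distrib_right, intro sum.cong refl, simp add: sum_distrib_right)
  also have "\<dots> = (\<Sum>j<?N. \<Sum>p<?M. \<Sum>g<?N. \<Sum>q<?M.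
      if same_block ns j g then z j p * E j g $$ (p,q) * cnj (z g q) else 0)"
    by (rule sum_swap_pairs)
  also have "\<dots> = (\<Sum>j<?N. \<Sum>g<?N. \<Sum>p<?M. \<Sum>q<?M.
      if same_block ns j g then z j p * E j g $$ (p,q) * cnj (z g q) else 0)"
    by (intro sum.cong refl sum.swap)
  also have "\<dots> = choi_form (\<lambda>j p. cnj (z j p))"
    unfolding choi_form_def sesq_form_def E_def by (intro sum.cong refl) simp
  finally show ?thesis unfolding z_def .
qed

lemma module_positive_iff_choi:
  "(\<forall>\<xi>\<in>Mmod ns ms. cstar_pos (blockalg ms) op_mult (mod_inner ns ms \<xi> (C_op ns ms \<Phi> \<xi>)))
     \<longleftrightarrow> (\<forall>y. 0 \<le> choi_form y)"
proof
  let ?N = "tdim ns" and ?M = "tdim ms"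
  assume pos: "\<forall>\<xi>\<in>Mmod ns ms. cstar_pos (blockalg ms) op_mult (mod_inner ns ms \<xi> (C_op ns ms \<Phi> \<xi>))"
  show "\<forall>y. 0 \<le> choi_form y"
  proof
    fix y
    define \<xi> where "\<xi> = (\<lambda>g. if g < ?N then mat ?M ?M (\<lambda>(a,b). if a = b then cnj (y g a) else 0) else 0\<^sub>m 0 0)"
    have \<xi>: "\<xi> \<in> Mmod ns ms"
      unfolding Mmod_def \<xi>_def by (auto intro!: blockalgI simp: same_block_refl)
    then have "0 \<le> qform ?M (\<lambda>r c. mod_inner ns ms \<xi> (C_op ns ms \<Phi> \<xi>) $$ (r,c)) (\<lambda>_. 1)"
      using pos cstar_pos_blockalg_op_iff[OF mod_inner_C_op_blockalg] by blast
    also have "\<dots> = choi_form (\<lambda>j p. cnj (adj_vec_mult ?M (\<lambda>_. 1) (\<xi> j) p))"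
      by (rule qform_mod_inner_C_op[OF \<xi>])
    also have "\<dots> = choi_form y"
      by (rule choi_form_cong) (simp add: adj_vec_mult_def \<xi>_def if_distrib[of "\<lambda>x. x $$ _"] cong: if_cong)
    finally show "0 \<le> choi_form y" .
  qed
next
  assume "\<forall>y. 0 \<le> choi_form y"
  then show "\<forall>\<xi>\<in>Mmod ns ms. cstar_pos (blockalg ms) op_mult (mod_inner ns ms \<xi> (C_op ns ms \<Phi> \<xi>))"
    using cstar_pos_blockalg_op_iff[OF mod_inner_C_op_blockalg] qform_mod_inner_C_op by simp
qed

lemma completely_positive_imp_choi:
  assumes "completely_positive ns ms \<Phi>"
  shows "0 \<le> choi_form y"
proof -
  let ?N = "tdim ns" and ?M = "tdim ms"
  define X where "X = (\<lambda>j g. if same_block ns j g then munit ?N j g else 0\<^sub>m ?N ?N)"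
  have X: "\<forall>i<?N. \<forall>j<?N. X i j \<in> blockalg ns"
    by (auto simp: X_def munit_blockalg zero_blockalg)
  then have PhiX: "\<forall>i<?N. \<forall>j<?N. \<Phi> (X i j) \<in> blockalg ms"
    by (simp add: Phi_blockalg)
  have "cstar_pos (Mk ?N ?N (blockalg ns)) (*) (blockmat ?N ?N X)"
    unfolding X_def by (rule choi_matrix_cstar_pos)
  then have "cstar_pos (Mk ?N ?M (blockalg ms)) (*) (blockmat ?N ?M (\<lambda>i j. \<Phi> (X i j)))"
    using assms X unfolding completely_positive_def by blast
  then have "0 \<le> qform (?N * ?M) (\<lambda>r c. blockmat ?N ?M (\<lambda>i j. \<Phi> (X i j)) $$ (r,c)) (\<lambda>R. y (R div ?M) (R mod ?M))"
    unfolding cstar_pos_Mk_iff[OF PhiX] by blast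
  also have "\<dots> = (\<Sum>i<?N. \<Sum>j<?N. sesq_form ?M (y i) (\<Phi> (X i j)) (y j))"
    unfolding qform_blockmat by (intro sum.cong refl sesq_form_cong) simp_all
  also have "\<dots> = choi_form y"
    unfolding choi_form_def X_def by (intro sum.cong refl) (simp add: Phi_zero sesq_form_def)
  finally show ?thesis .
qed

lemma choi_form_lincomb:
  assumes b: "\<forall>i<k. b i \<in> blockalg ns" and t: "t < tdim ns"
  shows "choi_form (\<lambda>r p. \<Sum>i<k. b i $$ (t,r) * w i p) =
    (\<Sum>r<tdim ns. \<Sum>s<tdim ns. \<Sum>i<k. \<Sum>j<k.
       cnj (b i $$ (t,r)) * b j $$ (t,s) * sesq_form (tdim ms) (w i) (\<Phi> (munit (tdim ns) r s)) (w j))"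
  unfolding choi_form_def
proof (intro sum.cong refl)
  fix r s assume r: "r \<in> {..<tdim ns}" and s: "s \<in> {..<tdim ns}"
  show "(if same_block ns r s
         then sesq_form (tdim ms) (\<lambda>p. \<Sum>i<k. b i $$ (t,r) * w i p) (\<Phi> (munit (tdim ns) r s))
           (\<lambda>q. \<Sum>j<k. b j $$ (t,s) * w j q) else 0) =
    (\<Sum>i<k. \<Sum>j<k. cnj (b i $$ (t,r)) * b j $$ (t,s) * sesq_form (tdim ms) (w i) (\<Phi> (munit (tdim ns) r s)) (w j))"
  proof (cases "same_block ns r s")
    case True
    then show ?thesis by (simp add: sesq_form_sum)
  next
    case False
    have "b i $$ (t,r) = 0 \<or> b j $$ (t,s) = 0" if "i < k" "j < k" for i j
      using False b that t r s blockalg_entry_zero by (metis lessThan_iff same_block_sym same_block_trans)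
    then show ?thesis using False by (auto intro!: sum.neutral)
  qed
qed

lemma qform_Phi_blockmat:
  assumes B: "\<forall>l<k. \<forall>i<k. B l i \<in> blockalg ns"
    and X: "\<forall>i<k. \<forall>j<k. X i j \<in> blockalg ns"
    and XB: "blockmat k (tdim ns) X = adj (blockmat k (tdim ns) B) * blockmat k (tdim ns) B"
  shows "qform (k * tdim ms) (\<lambda>r c. blockmat k (tdim ms) (\<lambda>i j. \<Phi> (X i j)) $$ (r,c)) v =
    (\<Sum>l<k. \<Sum>t<tdim ns. choi_form (\<lambda>r p. \<Sum>i<k. B l i $$ (t,r) * v (i * tdim ms + p)))"
proof -
  let ?N = "tdim ns" and ?M = "tdim ms"
  define w where "w = (\<lambda>i p. v (i * ?M + p))"
  define F where "F = (\<lambda>i j r s l t. cnj (B l i $$ (t,r)) * B l j $$ (t,s) *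
      sesq_form ?M (w i) (\<Phi> (munit ?N r s)) (w j))"
  have X_entry: "X i j $$ (r,s) = (\<Sum>l<k. \<Sum>t<?N. cnj (B l i $$ (t,r)) * B l j $$ (t,s))"
    if "i < k" "j < k" "r < ?N" "s < ?N" for i j r s
    using that index_blockmat[of i k j r ?N s X] index_adj_blockmat_mult[of i k j r ?N s B] XB by simp
  have "qform (k * ?M) (\<lambda>r c. blockmat k ?M (\<lambda>i j. \<Phi> (X i j)) $$ (r,c)) v =
      (\<Sum>i<k. \<Sum>j<k. sesq_form ?M (w i) (\<Phi> (X i j)) (w j))"
    unfolding w_def by (rule qform_blockmat)
  also have "\<dots> = (\<Sum>i<k. \<Sum>j<k. \<Sum>r<?N. \<Sum>s<?N. \<Sum>l<k. \<Sum>t<?N. F i j r s l t)"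
    unfolding F_def using X by (intro sum.cong refl) (simp add: sesq_form_Phi X_entry sum_distrib_right)
  also have "\<dots> = (\<Sum>i<k. \<Sum>j<k. \<Sum>l<k. \<Sum>t<?N. \<Sum>r<?N. \<Sum>s<?N. F i j r s l t)"
    by (intro sum.cong refl sum_swap_pairs)
  also have "\<dots> = (\<Sum>l<k. \<Sum>t<?N. \<Sum>i<k. \<Sum>j<k. \<Sum>r<?N. \<Sum>s<?N. F i j r s l t)"
    by (rule sum_swap_pairs)
  also have "\<dots> = (\<Sum>l<k. \<Sum>t<?N. \<Sum>r<?N. \<Sum>s<?N. \<Sum>i<k. \<Sum>j<k. F i j r s l t)"
    by (intro sum.cong refl sum_swap_pairs)
  also have "\<dots> = (\<Sum>l<k. \<Sum>t<?N. choi_form (\<lambda>r p. \<Sum>i<k. B l i $$ (t,r) * w i p))"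
    unfolding F_def using B by (intro sum.cong refl choi_form_lincomb[symmetric]) auto
  finally show ?thesis unfolding w_def .
qed

lemma choi_imp_completely_positive:
  assumes choi: "\<forall>y. 0 \<le> choi_form y"
  shows "completely_positive ns ms \<Phi>"
  unfolding completely_positive_def
proof (intro allI impI)
  fix k X
  assume X: "\<forall>i<k. \<forall>j<k. X i j \<in> blockalg ns"
    and "cstar_pos (Mk k (tdim ns) (blockalg ns)) (*) (blockmat k (tdim ns) X)"
  then obtain B where B: "\<forall>l<k. \<forall>i<k. B l i \<in> blockalg ns"
      and XB: "blockmat k (tdim ns) X = adj (blockmat k (tdim ns) B) * blockmat k (tdim ns) B"
    unfolding cstar_pos_def Mk_def by blast
  have PhiX: "\<forall>i<k. \<forall>j<k. \<Phi> (X i j) \<in> blockalg ms" using X by (simp add: Phi_blockalg)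
  have "\<forall>v. 0 \<le> qform (k * tdim ms) (\<lambda>r c. blockmat k (tdim ms) (\<lambda>i j. \<Phi> (X i j)) $$ (r,c)) v"
    unfolding qform_Phi_blockmat[OF B X XB] using choi by (intro allI sum_nonneg) auto
  then show "cstar_pos (Mk k (tdim ms) (blockalg ms)) (*) (blockmat k (tdim ms) (\<lambda>i j. \<Phi> (X i j)))"
    unfolding cstar_pos_Mk_iff[OF PhiX] .
qed

end

theorem proposition3p6:
  fixes ns ms :: "nat list" and \<Phi> :: "complex mat \<Rightarrow> complex mat"
  assumes "linear_on (blockalg ns) \<Phi>"
    and "\<Phi> ` blockalg ns \<subseteq> blockalg ms"
  shows "completely_positive ns ms \<Phi> \<longleftrightarrow>
    (\<forall>\<xi>\<in>Mmod ns ms. cstar_pos (blockalg ms) op_mult (mod_inner ns ms \<xi> (C_op ns ms \<Phi> \<xi>)))"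
proof -
  interpret blockalg_map ns ms \<Phi> using assms by unfold_locales
  have "completely_positive ns ms \<Phi> \<longleftrightarrow> (\<forall>y. 0 \<le> choi_form y)"
    using completely_positive_imp_choi choi_imp_completely_positive by blast
  also have "\<dots> \<longleftrightarrow> (\<forall>\<xi>\<in>Mmod ns ms. cstar_pos (blockalg ms) op_mult (mod_inner ns ms \<xi> (C_op ns ms \<Phi> \<xi>)))"
    by (rule module_positive_iff_choi[symmetric])
  finally show ?thesis .
qed

end
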